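(* For each $n\ge 0$ let $\mathbb{Z}_n$ be a $1$-Gray code for $\mathcal{Z}_n$ whose first word is $0(001)^\star$ and whose last word is $(001)^\star$. Define $\mathbb{W}^1_0$ as the list containing only the empty word, and for $n\ge1$, $\mathbb{W}^1_n=1\cdot\mathbb{W}^1_{n-1}\circ\mathbb{Z}_n$. Then for any $n\ge 1$, $\mathbb{W}^1_n$ is a $1$-Gray code for $\mathcal{W}^1_n$ whose first word is $1^n$ and whose last word is $(001)^\star$.
   Context: A binary word is $1$-decreasing if for every maximal run of $0$s, of length $a>0$, together with the (possibly empty) maximal run of $1$s immediately following it, of length $b$, one has $a>b$. $\mathcal{W}^1_n$ is the set of $1$-decreasing binary words of length $n$. For $n\ge1$, $\mathcal{Z}_n$ is the set of words in $\mathcal{W}^1_n$ starting with $0$; $\mathcal{Z}_0=\{\epsilon\}$. A $1$-Gray code for a set $\mathcal{A}$ of equal-length words is an ordered list of all elements of $\mathcal{A}$, each once, in which consecutive words differ in at most one position. For a list $\mathbb{L}$ and a word $w$, $w\cdot\mathbb{L}$ is the list obtained by prefixing $w$ to every word of $\mathbb{L}$; $\mathbb{L}_1\circ\mathbb{L}_2$ is the concatenation of lists. In a word of prescribed length $n$ written $u(001)^\star$, $(001)^\star$ denotes the prefix of $001001\cdots$ of the length needed to reach total length $n$. *)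

theory Defs
  imports Main
begin

text \<open>Binary words are bool lists: False = 0, True = 1.\<close>

definition one_decreasing :: "bool list \<Rightarrow> bool" where
  "one_decreasing w \<longleftrightarrow>
     (\<forall>i j k. i < j \<and> j \<le> k \<and> k \<le> length w
        \<and> (\<forall>p\<in>{i..<j}. \<not> w ! p)
        \<and> (i = 0 \<or> w ! (i - 1))
        \<and> (j = length w \<or> w ! j)
        \<and> (\<forall>p\<in>{j..<k}. w ! p)
        \<and> (k = length w \<or> \<not> w ! k)
        \<longrightarrow> k - j < j - i)"

definition W1 :: "nat \<Rightarrow> bool list set" where
  "W1 n = {w. length w = n \<and> one_decreasing w}"

definition Zset :: "nat \<Rightarrow> bool list set" where
  "Zset n = (if n = 0 then {[]} else {w \<in> W1 n. hd w = False})"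

definition hamming :: "bool list \<Rightarrow> bool list \<Rightarrow> nat" where
  "hamming u v = card {p. p < length u \<and> p < length v \<and> u ! p \<noteq> v ! p}"

definition gray1 :: "bool list set \<Rightarrow> bool list list \<Rightarrow> bool" where
  "gray1 A L \<longleftrightarrow> distinct L \<and> set L = A
     \<and> (\<forall>i. Suc i < length L \<longrightarrow> hamming (L ! i) (L ! Suc i) \<le> 1)"

text \<open>(001)^* of length n, and 0(001)^* of length n\<close>
definition pat001 :: "nat \<Rightarrow> bool list" where
  "pat001 n = map (\<lambda>i. i mod 3 = 2) [0..<n]"

definition zpat001 :: "nat \<Rightarrow> bool list" where
  "zpat001 n = take n (False # pat001 n)"

fun Wlist :: "(nat \<Rightarrow> bool list list) \<Rightarrow> nat \<Rightarrow> bool list list" where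
  "Wlist Zs 0 = [[]]"
| "Wlist Zs (Suc n) = map ((#) True) (Wlist Zs n) @ Zs (Suc n)"

end

theory Submission
  imports Defs
begin

text \<open>A leading 1 lies in no pair (run of 0s, following run of 1s), so prepending 1 preserves
  and reflects being 1-decreasing; hence \<open>W\<^sup>1\<^sub>n = 1\<cdot>W\<^sup>1\<^sub>n\<^sub>-\<^sub>1 \<union> Z\<^sub>n\<close> disjointly. The two Gray codes are
  joined at the last word \<open>1(001)\<^sup>*\<close> of the first part and the first word \<open>0(001)\<^sup>*\<close> of
  \<open>Z\<^sub>n\<close>, which differ only in the first letter.\<close>

definition zero_one_runs :: "bool list \<Rightarrow> nat \<Rightarrow> nat \<Rightarrow> nat \<Rightarrow> bool" where
  "zero_one_runs w i j k \<longleftrightarrow> i < j \<and> j \<le> k \<and> k \<le> length w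
        \<and> (\<forall>p\<in>{i..<j}. \<not> w ! p)
        \<and> (i = 0 \<or> w ! (i - 1))
        \<and> (j = length w \<or> w ! j)
        \<and> (\<forall>p\<in>{j..<k}. w ! p)
        \<and> (k = length w \<or> \<not> w ! k)"

lemma one_decreasing_iff_zero_one_runs:
  "one_decreasing w \<longleftrightarrow> (\<forall>i j k. zero_one_runs w i j k \<longrightarrow> k - j < j - i)"
  unfolding one_decreasing_def zero_one_runs_def ..

lemma zero_one_runs_Cons_True_Suc:
  "zero_one_runs (True # w) (Suc i) (Suc j) (Suc k) \<longleftrightarrow> zero_one_runs w i j k"
  unfolding zero_one_runs_def
  by (simp add: nth_Cons' flip: image_Suc_atLeastLessThan)

lemma zero_one_runs_Cons_True_nonzero:
  assumes "zero_one_runs (True # w) i j k"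
  shows "i \<noteq> 0"
proof -
  from assms have "i < j" and "\<forall>p\<in>{i..<j}. \<not> (True # w) ! p"
    unfolding zero_one_runs_def by blast+
  then have "\<not> (True # w) ! i" by simp
  then show ?thesis by (metis nth_Cons_0)
qed

lemma one_decreasing_Cons_True: "one_decreasing (True # w) \<longleftrightarrow> one_decreasing w"
  unfolding one_decreasing_iff_zero_one_runs
proof (intro iffI allI impI)
  fix i j k
  assume od: "\<forall>i j k. zero_one_runs (True # w) i j k \<longrightarrow> k - j < j - i"
    and "zero_one_runs w i j k"
  then have "zero_one_runs (True # w) (Suc i) (Suc j) (Suc k)"
    by (simp only: zero_one_runs_Cons_True_Suc)
  with od show "k - j < j - i" by fastforce
next
  fix i j k
  assume od: "\<forall>i j k. zero_one_runs w i j k \<longrightarrow> k - j < j - i"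
    and runs: "zero_one_runs (True # w) i j k"
  from runs have "i \<noteq> 0" by (rule zero_one_runs_Cons_True_nonzero)
  moreover from runs have "i < j" "j \<le> k"
    unfolding zero_one_runs_def by blast+
  ultimately obtain i' j' k' where "i = Suc i'" "j = Suc j'" "k = Suc k'"
    by (metis less_le_trans not0_implies_Suc not_less0)
  with runs od show "k - j < j - i"
    by (simp add: zero_one_runs_Cons_True_Suc)
qed

lemma one_decreasing_replicate_False: "one_decreasing (replicate n False)"
  unfolding one_decreasing_iff_zero_one_runs
proof (intro allI impI)
  fix i j k assume "zero_one_runs (replicate n False) i j k"
  then have "i < j" "j \<le> k" "k \<le> n" "j = n \<or> replicate n False ! j"
    unfolding zero_one_runs_def length_replicate by blast+
  then have "j = n" by (metis le_trans nat_less_le nth_replicate)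
  with \<open>i < j\<close> \<open>j \<le> k\<close> \<open>k \<le> n\<close> show "k - j < j - i" by simp
qed

lemma hamming_Cons:
  "hamming (x # u) (y # v) = (if x = y then 0 else 1) + hamming u v"
proof -
  let ?S = "{p. p < length u \<and> p < length v \<and> u ! p \<noteq> v ! p}"
  have "{p. p < length (x # u) \<and> p < length (y # v) \<and> (x # u) ! p \<noteq> (y # v) ! p}
      = (if x = y then Suc ` ?S else insert 0 (Suc ` ?S))" (is "?D = ?R")
  proof (rule set_eqI)
    fix p show "p \<in> ?D \<longleftrightarrow> p \<in> ?R"
      by (cases p) (auto simp: inj_image_mem_iff)
  qed
  then show ?thesis
    unfolding hamming_def by (simp add: card_image)
qed

lemma hamming_self: "hamming u u = 0"
  unfolding hamming_def by simp

lemma W1_Suc: "W1 (Suc n) = (#) True ` W1 n \<union> Zset (Suc n)"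
proof (intro set_eqI iffI)
  fix w assume "w \<in> W1 (Suc n)"
  then obtain b v where "w = b # v" "length v = n" "one_decreasing (b # v)"
    unfolding W1_def by (auto simp: length_Suc_conv)
  then show "w \<in> (#) True ` W1 n \<union> Zset (Suc n)"
    by (cases b) (auto simp: W1_def Zset_def one_decreasing_Cons_True)
next
  fix w assume "w \<in> (#) True ` W1 n \<union> Zset (Suc n)"
  then show "w \<in> W1 (Suc n)"
    by (auto simp: W1_def Zset_def one_decreasing_Cons_True)
qed

lemma replicate_False_in_Zset: "replicate n False \<in> Zset n"
  by (cases n) (simp_all add: Zset_def W1_def one_decreasing_replicate_False del: replicate_Suc)

lemma zpat001_Suc: "zpat001 (Suc n) = False # pat001 n"
  unfolding zpat001_def pat001_def by (simp add: take_map)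

lemma gray1_map_Cons:
  assumes "gray1 A L"
  shows "gray1 ((#) x ` A) (map ((#) x) L)"
  using assms unfolding gray1_def by (simp add: distinct_map hamming_Cons)

lemma gray1_append:
  assumes "gray1 A L" and "gray1 B M" and "A \<inter> B = {}"
    and "L \<noteq> [] \<Longrightarrow> M \<noteq> [] \<Longrightarrow> hamming (last L) (hd M) \<le> 1"
  shows "gray1 (A \<union> B) (L @ M)"
  unfolding gray1_def
proof (intro conjI allI impI)
  show "distinct (L @ M)" "set (L @ M) = A \<union> B"
    using assms(1-3) unfolding gray1_def by auto
  fix i assume "Suc i < length (L @ M)"
  then consider "Suc i < length L" | "Suc i = length L" | "length L < Suc i"
    by linarith
  then show "hamming ((L @ M) ! i) ((L @ M) ! Suc i) \<le> 1"
  proof cases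
    case 1
    then show ?thesis using assms(1) unfolding gray1_def by (simp add: nth_append)
  next
    case 2
    with \<open>Suc i < length (L @ M)\<close> have "L \<noteq> []" "M \<noteq> []" by auto
    moreover from 2 have "i = length L - 1" by simp
    ultimately show ?thesis using assms(4) by (simp add: nth_append last_conv_nth hd_conv_nth)
  next
    case 3
    then show ?thesis using assms(2) \<open>Suc i < length (L @ M)\<close> unfolding gray1_def
      by (simp add: nth_append Suc_diff_le)
  qed
qed

lemma Wlist_not_Nil: "Wlist Zs n \<noteq> []"
  by (induction n) simp_all

lemma hd_Wlist: "hd (Wlist Zs n) = replicate n True"
  by (induction n) (simp_all add: hd_map Wlist_not_Nil)

context
  fixes Zs :: "nat \<Rightarrow> bool list list"
  assumes gray_Zs: "\<And>n. gray1 (Zset n) (Zs n)"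
begin

lemma Zs_not_Nil: "Zs n \<noteq> []"
  using gray_Zs[of n] replicate_False_in_Zset[of n] unfolding gray1_def by auto

lemma last_Wlist:
  assumes "\<And>n. last (Zs n) = pat001 n"
  shows "last (Wlist Zs n) = pat001 n"
  using assms by (cases n) (simp_all add: pat001_def Zs_not_Nil)

lemma gray1_Wlist:
  assumes hd_Zs: "\<And>n. hd (Zs n) = zpat001 n" and last_Zs: "\<And>n. last (Zs n) = pat001 n"
  shows "gray1 (W1 n) (Wlist Zs n)"
proof (induction n)
  case 0
  have "W1 0 = {[]}"
    unfolding W1_def one_decreasing_iff_zero_one_runs zero_one_runs_def by auto
  then show ?case unfolding gray1_def by simp
next
  case (Suc n)
  have "hamming (last (map ((#) True) (Wlist Zs n))) (hd (Zs (Suc n))) = 1"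
    using hd_Zs last_Zs
    by (simp add: last_map Wlist_not_Nil last_Wlist zpat001_Suc hamming_Cons hamming_self)
  moreover have "(#) True ` W1 n \<inter> Zset (Suc n) = {}"
    unfolding Zset_def by auto
  ultimately show ?case
    using gray1_append[OF gray1_map_Cons[OF Suc.IH] gray_Zs] by (simp add: W1_Suc)
qed

end

theorem theorem4:
  fixes Zs :: "nat \<Rightarrow> bool list list"
  assumes "\<And>n. gray1 (Zset n) (Zs n)"
    and "\<And>n. hd (Zs n) = zpat001 n"
    and "\<And>n. last (Zs n) = pat001 n"
    and "n \<ge> 1"
  shows "gray1 (W1 n) (Wlist Zs n) \<and> hd (Wlist Zs n) = replicate n True
         \<and> last (Wlist Zs n) = pat001 n"
  using gray1_Wlist[OF assms(1-3)] hd_Wlist last_Wlist[OF assms(1,3)] by blast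

end
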